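(* Let $M$ be a unicyclic partial multiplication matrix, let $\pi^\#$ be a gridded $M$-coil with points $v_1,\dots,v_n$ and let $\sigma^\#$ be a gridded $M$-coil with points $u_1,\dots,u_m$ (each ordered as in the definition of a coil), where $m<n$. Let $L=\{\bullet,\circ\}$ be a two-element antichain, and label $\pi^\#$ by $\ell(v_i)=\bullet$ for $1<i<n$ and $\ell(v_1)=\ell(v_n)=\circ$, and $\sigma^\#$ by $\ell(u_i)=\bullet$ for $1<i<m$ and $\ell(u_1)=\ell(u_m)=\circ$. Then there is no labelled embedding of the labelled gridded permutation $\sigma^\#$ into the labelled gridded permutation $\pi^\#$.
   Context: A gridding matrix has entries in $\{0,1,-1\}$; an $m\times n$ one has $m$ columns, $n$ rows, $M_{ij}$ in column $i$ from the left and row $j$ from the bottom. An $M$-gridding of a permutation $\pi$ of length $L$ is a choice of vertical lines $\tfrac12=v_0\le\dots\le v_m=L+\tfrac12$ and horizontal lines $\tfrac12=h_0\le\dots\le h_n=L+\tfrac12$, not through points of $\pi$, such that in each cell $C_{ij}=\{v_{i-1}<x<v_i,\ h_{j-1}<y<h_j\}$ the points of $\pi$ are absent if $M_{ij}=0$, increasing if $M_{ij}=1$, decreasing if $M_{ij}=-1$; the result is an $M$-gridded permutation. The row-column graph $G_M$ is the bipartite graph on $\{1,\dots,m\}\cup\{1',\dots,n'\}$ with edge $ij'$ iff $M_{ij}\neq0$; $M$ is unicyclic if $G_M$ has exactly one cycle. A labelled embedding of a labelled gridded permutation $\sigma^\#$ into $\pi^\#$ is a subsequence of $\pi$ order-isomorphic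 to $\sigma$ mapping each point of $\sigma^\#$ to a point in the cell with the same index and with the same label (labels form an antichain). $M$ is a partial multiplication matrix: there are fixed $c_1,\dots,c_m,r_1,\dots,r_n\in\{\pm1\}$ with $M_{ij}=c_ir_j$ for each non-zero entry. Column $i$ is oriented left-to-right if $c_i=1$, right-to-left otherwise; row $j$ bottom-to-top if $r_j=1$, top-to-bottom otherwise. The orientation digraph of an $M$-gridded permutation has its points as vertices with $x\to y$ whenever $x,y$ lie in a common column of cells and $x$ precedes $y$ in that column's orientation, or in a common row of cells and $x$ precedes $y$ in that row's orientation. Let $\ell$ be the length of the cycle of $G_M$. A gridded $M$-coil is an $M$-gridded permutation of length $n>\ell$ with an ordering $v_1,\dots,v_n$ of its points and a labelling by $1,\dots,\ell$ of the cells corresponding to the edges of the cycle such that (C1) $v_i$ lies in cell $i\bmod\ell$ (residues in $\{1,\dots,\ell\}$); (C2) $v_{i-1}\to v_i$ for $1<i\le n$; (C3) $v_i\to v_{i-\ell-1}$ for $\ell+1<i\le n$; (C4) $v_{\ell+1}\to v_1$. *)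

theory Defs
  imports Main "HOL.Real"
begin

text \<open>A permutation of length L is a bijection of {1..L}; its points are (x, pi x) for x in {1..L}.
  Points are identified with their x-coordinate (position).\<close>

definition is_perm :: "nat \<Rightarrow> (nat \<Rightarrow> nat) \<Rightarrow> bool" where
  "is_perm L pi \<longleftrightarrow> bij_betw pi {1..L} {1..L}"

text \<open>A gridding matrix with p columns and q rows; entry M i j is in column i, row j (1-based).\<close>

definition gridding_matrix :: "(nat \<Rightarrow> nat \<Rightarrow> int) \<Rightarrow> nat \<Rightarrow> nat \<Rightarrow> bool" where
  "gridding_matrix M p q \<longleftrightarrow> (\<forall>i\<in>{1..p}. \<forall>j\<in>{1..q}. M i j \<in> {0, 1, -1})"

definition partial_mult_matrix ::
  "(nat \<Rightarrow> nat \<Rightarrow> int) \<Rightarrow> nat \<Rightarrow> nat \<Rightarrow> (nat \<Rightarrow> int) \<Rightarrow> (nat \<Rightarrow> int) \<Rightarrow> bool" where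
  "partial_mult_matrix M p q c r \<longleftrightarrow> gridding_matrix M p q
     \<and> (\<forall>i\<in>{1..p}. c i \<in> {1, -1}) \<and> (\<forall>j\<in>{1..q}. r j \<in> {1, -1})
     \<and> (\<forall>i\<in>{1..p}. \<forall>j\<in>{1..q}. M i j \<noteq> 0 \<longrightarrow> M i j = c i * r j)"

definition in_cell :: "(nat \<Rightarrow> real) \<Rightarrow> (nat \<Rightarrow> real) \<Rightarrow> (nat \<Rightarrow> nat) \<Rightarrow> nat \<Rightarrow> nat \<Rightarrow> nat \<Rightarrow> bool" where
  "in_cell v h pi i j x \<longleftrightarrow> v (i - 1) < real x \<and> real x < v i \<and> h (j - 1) < real (pi x) \<and> real (pi x) < h j"

definition gridded ::
  "(nat \<Rightarrow> nat \<Rightarrow> int) \<Rightarrow> nat \<Rightarrow> nat \<Rightarrow> nat \<Rightarrow> (nat \<Rightarrow> nat) \<Rightarrow> (nat \<Rightarrow> real) \<Rightarrow> (nat \<Rightarrow> real) \<Rightarrow> bool" where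
  "gridded M p q L pi v h \<longleftrightarrow> is_perm L pi
     \<and> v 0 = 1/2 \<and> v p = real L + 1/2 \<and> (\<forall>k<p. v k \<le> v (Suc k))
     \<and> h 0 = 1/2 \<and> h q = real L + 1/2 \<and> (\<forall>k<q. h k \<le> h (Suc k))
     \<and> (\<forall>k\<le>p. \<forall>x\<in>{1..L}. v k \<noteq> real x)
     \<and> (\<forall>k\<le>q. \<forall>x\<in>{1..L}. h k \<noteq> real (pi x))
     \<and> (\<forall>i\<in>{1..p}. \<forall>j\<in>{1..q}.
          (M i j = 0 \<longrightarrow> (\<forall>x\<in>{1..L}. \<not> in_cell v h pi i j x))
        \<and> (M i j = 1 \<longrightarrow> (\<forall>x\<in>{1..L}. \<forall>y\<in>{1..L}.
              in_cell v h pi i j x \<and> in_cell v h pi i j y \<and> x < y \<longrightarrow> pi x < pi y))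
        \<and> (M i j = -1 \<longrightarrow> (\<forall>x\<in>{1..L}. \<forall>y\<in>{1..L}.
              in_cell v h pi i j x \<and> in_cell v h pi i j y \<and> x < y \<longrightarrow> pi x > pi y)))"

text \<open>Vertices: Inl i for column i, Inr j for row j'. Edges are 2-element sets.\<close>

definition rc_edges :: "(nat \<Rightarrow> nat \<Rightarrow> int) \<Rightarrow> nat \<Rightarrow> nat \<Rightarrow> (nat + nat) set set" where
  "rc_edges M p q = {{Inl i, Inr j} | i j. i \<in> {1..p} \<and> j \<in> {1..q} \<and> M i j \<noteq> 0}"

definition is_cycle :: "'a set set \<Rightarrow> 'a list \<Rightarrow> bool" where
  "is_cycle E ws \<longleftrightarrow> distinct ws \<and> length ws \<ge> 3
     \<and> (\<forall>k<length ws. {ws ! k, ws ! (Suc k mod length ws)} \<in> E)"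

definition cycle_edges :: "'a list \<Rightarrow> 'a set set" where
  "cycle_edges ws = {{ws ! k, ws ! (Suc k mod length ws)} | k. k < length ws}"

definition cycles_of :: "'a set set \<Rightarrow> 'a set set set" where
  "cycles_of E = {cycle_edges ws | ws. is_cycle E ws}"

definition unicyclic :: "(nat \<Rightarrow> nat \<Rightarrow> int) \<Rightarrow> nat \<Rightarrow> nat \<Rightarrow> bool" where
  "unicyclic M p q \<longleftrightarrow> (\<exists>!C. C \<in> cycles_of (rc_edges M p q))"

definition the_cycle :: "(nat \<Rightarrow> nat \<Rightarrow> int) \<Rightarrow> nat \<Rightarrow> nat \<Rightarrow> (nat + nat) set set" where
  "the_cycle M p q = (THE C. C \<in> cycles_of (rc_edges M p q))"

definition cycle_len :: "(nat \<Rightarrow> nat \<Rightarrow> int) \<Rightarrow> nat \<Rightarrow> nat \<Rightarrow> nat" where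
  "cycle_len M p q = card (the_cycle M p q)"

definition cycle_cells :: "(nat \<Rightarrow> nat \<Rightarrow> int) \<Rightarrow> nat \<Rightarrow> nat \<Rightarrow> (nat \<times> nat) set" where
  "cycle_cells M p q = {(i, j). {Inl i, Inr j} \<in> the_cycle M p q}"

definition orient_arrow ::
  "nat \<Rightarrow> nat \<Rightarrow> (nat \<Rightarrow> int) \<Rightarrow> (nat \<Rightarrow> int) \<Rightarrow> (nat \<Rightarrow> real) \<Rightarrow> (nat \<Rightarrow> real) \<Rightarrow> (nat \<Rightarrow> nat)
   \<Rightarrow> nat \<Rightarrow> nat \<Rightarrow> bool" where
  "orient_arrow p q c r v h pi x y \<longleftrightarrow>
     (\<exists>i\<in>{1..p}. v (i - 1) < real x \<and> real x < v i \<and> v (i - 1) < real y \<and> real y < v i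
        \<and> ((c i = 1 \<and> x < y) \<or> (c i = -1 \<and> y < x)))
   \<or> (\<exists>j\<in>{1..q}. h (j - 1) < real (pi x) \<and> real (pi x) < h j \<and> h (j - 1) < real (pi y) \<and> real (pi y) < h j
        \<and> ((r j = 1 \<and> pi x < pi y) \<or> (r j = -1 \<and> pi y < pi x)))"

text \<open>w i is the point v_i (as a position); lab labels the cycle cells by 1..ell.\<close>

definition gridded_coil ::
  "(nat \<Rightarrow> nat \<Rightarrow> int) \<Rightarrow> nat \<Rightarrow> nat \<Rightarrow> (nat \<Rightarrow> int) \<Rightarrow> (nat \<Rightarrow> int) \<Rightarrow> nat \<Rightarrow> (nat \<Rightarrow> nat)
   \<Rightarrow> (nat \<Rightarrow> real) \<Rightarrow> (nat \<Rightarrow> real) \<Rightarrow> (nat \<Rightarrow> nat) \<Rightarrow> (nat \<times> nat \<Rightarrow> nat) \<Rightarrow> bool" where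
  "gridded_coil M p q c r N pi v h w lab \<longleftrightarrow>
     (let ell = cycle_len M p q; arr = orient_arrow p q c r v h pi in
       gridded M p q N pi v h \<and> N > ell
     \<and> bij_betw w {1..N} {1..N}
     \<and> bij_betw lab (cycle_cells M p q) {1..ell}
     \<and> (\<forall>i\<in>{1..N}. \<exists>ij\<in>cycle_cells M p q.
           in_cell v h pi (fst ij) (snd ij) (w i) \<and> lab ij = (i - 1) mod ell + 1)
     \<and> (\<forall>i. 1 < i \<and> i \<le> N \<longrightarrow> arr (w (i - 1)) (w i))
     \<and> (\<forall>i. ell + 1 < i \<and> i \<le> N \<longrightarrow> arr (w i) (w (i - ell - 1)))
     \<and> arr (w (ell + 1)) (w 1))"

datatype lbl = Bullet | Circ

definition coil_label :: "(nat \<Rightarrow> nat) \<Rightarrow> nat \<Rightarrow> nat \<Rightarrow> lbl" where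
  "coil_label w N x = (if x = w 1 \<or> x = w N then Circ else Bullet)"

text \<open>Labelled embedding of (sigma, vs, hs, ls) of length m into (pi, vp, hp, lp) of length n.
  Labels form an antichain, so labels must be equal.\<close>

definition labelled_embedding ::
  "nat \<Rightarrow> nat \<Rightarrow> nat \<Rightarrow> (nat \<Rightarrow> nat) \<Rightarrow> (nat \<Rightarrow> real) \<Rightarrow> (nat \<Rightarrow> real) \<Rightarrow> (nat \<Rightarrow> 'l)
   \<Rightarrow> nat \<Rightarrow> (nat \<Rightarrow> nat) \<Rightarrow> (nat \<Rightarrow> real) \<Rightarrow> (nat \<Rightarrow> real) \<Rightarrow> (nat \<Rightarrow> 'l) \<Rightarrow> bool" where
  "labelled_embedding p q m sigma vs hs ls n pi vp hp lp \<longleftrightarrow>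
     (\<exists>f. strict_mono_on {1..m} f \<and> f ` {1..m} \<subseteq> {1..n}
        \<and> (\<forall>a\<in>{1..m}. \<forall>b\<in>{1..m}. sigma a < sigma b \<longleftrightarrow> pi (f a) < pi (f b))
        \<and> (\<forall>a\<in>{1..m}. \<forall>i\<in>{1..p}. \<forall>j\<in>{1..q}.
              in_cell vs hs sigma i j a \<longrightarrow> in_cell vp hp pi i j (f a))
        \<and> (\<forall>a\<in>{1..m}. ls a = lp (f a)))"

end

theory Submission
  imports Defs
begin

text \<open>Index the points of a coil by the coil order, so that the i-th point lies in the
  cycle cell numbered i mod \<open>\<ell>\<close>. Since every column and every row contains at most two
  cycle cells, the cells sharing a line with cell i are exactly cells i - 1 and i + 1, and the
  arrows of the coil then force: an arrow from the i-th to the j-th point has j \<le> i + 1, an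
  arrow inside a cell points backwards, and an arrow from cell i + 1 back to cell i spans at
  least \<open>\<ell>\<close> + 1 positions. A labelled embedding of the coil \<open>\<sigma>\<close> into the coil \<open>\<pi>\<close> sends the
  t-th point of \<open>\<sigma>\<close> to the g(t)-th point of \<open>\<pi>\<close>, where g respects cells and arrows; the
  step arrows give g(t + 1) \<le> g(t) + 1, the back arrows a matching lower bound, so
  g(t) = g(1) + t - 1. The labels force g(1), g(m) \<in> {1, n}, impossible when 1 < m < n.\<close>

lemma mod_eq_less_imp_add_le:
  fixes a b l :: nat
  assumes "a < b" and "a mod l = b mod l"
  shows "a + l \<le> b"
proof -
  have "l dvd b - a" using assms by (metis less_imp_le mod_eq_dvd_iff_nat)
  then have "l \<le> b - a" using assms(1) by (simp add: dvd_imp_le)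
  then show ?thesis using assms(1) by simp
qed

lemma mod_add_neq_self:
  fixes x k l :: nat
  assumes "0 < k" and "k < l"
  shows "(x + k) mod l \<noteq> x mod l"
proof
  assume "(x + k) mod l = x mod l"
  then have "l dvd k" by (simp add: mod_eq_dvd_iff_nat)
  with assms show False by (simp add: nat_dvd_not_less)
qed

lemma Suc_mod_cancel:
  fixes x y l :: nat
  shows "Suc x mod l = Suc y mod l \<longleftrightarrow> x mod l = y mod l"
  by (simp add: nat_mod_eq_iff)

lemma obtain_mod_representative:
  fixes k l :: nat
  assumes "0 < l"
  obtains x where "x \<in> {1..l}" and "x mod l = k mod l"
proof
  let ?x = "if k mod l = 0 then l else k mod l"
  show "?x \<in> {1..l}" using assms by (auto simp: less_imp_le)
  show "?x mod l = k mod l" by simp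
qed

section \<open>Coils as sequences of cycle cells\<close>

text \<open>The points of a coil are identified with their positions 1, ..., N in the coil order;
  \<open>col\<close> and \<open>row\<close> give the cell of a point, \<open>col_before\<close> and \<open>row_before\<close> the orientation
  orders of columns and rows. The last three assumptions are the coil conditions (C2)-(C4);
  the two before them are where unicyclicity of the matrix enters.\<close>

locale abstract_coil =
  fixes N ell :: nat
    and col row :: "nat \<Rightarrow> nat"
    and col_before row_before :: "nat \<Rightarrow> nat \<Rightarrow> bool"
  assumes cycle_len_ge_3: "3 \<le> ell"
    and cycle_len_less: "ell < N"
    and same_cell_iff_mod:
      "a \<in> {1..N} \<Longrightarrow> b \<in> {1..N} \<Longrightarrow> col a = col b \<and> row a = row b \<longleftrightarrow> a mod ell = b mod ell"
    and col_before_same_col: "col_before a b \<Longrightarrow> col a = col b"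
    and row_before_same_row: "row_before a b \<Longrightarrow> row a = row b"
    and col_before_trans: "col_before a b \<Longrightarrow> col_before b c \<Longrightarrow> col_before a c"
    and row_before_trans: "row_before a b \<Longrightarrow> row_before b c \<Longrightarrow> row_before a c"
    and col_before_asym: "col_before a b \<Longrightarrow> \<not> col_before b a"
    and row_before_asym: "row_before a b \<Longrightarrow> \<not> row_before b a"
    and col_before_iff_row_before:
      "a \<in> {1..N} \<Longrightarrow> b \<in> {1..N} \<Longrightarrow> col a = col b \<Longrightarrow> row a = row b
       \<Longrightarrow> col_before a b \<longleftrightarrow> row_before a b"
    and col_meets_two_rows:
      "x \<in> {1..N} \<Longrightarrow> y \<in> {1..N} \<Longrightarrow> z \<in> {1..N} \<Longrightarrow> col x = col y \<Longrightarrow> col y = col z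
       \<Longrightarrow> row x = row y \<or> row y = row z \<or> row x = row z"
    and row_meets_two_cols:
      "x \<in> {1..N} \<Longrightarrow> y \<in> {1..N} \<Longrightarrow> z \<in> {1..N} \<Longrightarrow> row x = row y \<Longrightarrow> row y = row z
       \<Longrightarrow> col x = col y \<or> col y = col z \<or> col x = col z"
    and step_arrow: "1 \<le> i \<Longrightarrow> i < N \<Longrightarrow> col_before i (Suc i) \<or> row_before i (Suc i)"
    and back_arrow:
      "1 \<le> i \<Longrightarrow> i + ell < N \<Longrightarrow> col_before (Suc (i + ell)) i \<or> row_before (Suc (i + ell)) i"
    and first_arrow: "col_before (Suc ell) 1 \<or> row_before (Suc ell) 1"
begin

definition before :: "nat \<Rightarrow> nat \<Rightarrow> bool" where
  "before a b \<longleftrightarrow> col_before a b \<or> row_before a b"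

definition same_cell :: "nat \<Rightarrow> nat \<Rightarrow> bool" where
  "same_cell a b \<longleftrightarrow> col a = col b \<and> row a = row b"

lemma before_Suc: "1 \<le> i \<Longrightarrow> i < N \<Longrightarrow> before i (Suc i)"
  using step_arrow unfolding before_def .

lemma before_back: "1 \<le> i \<Longrightarrow> i + ell < N \<Longrightarrow> before (Suc (i + ell)) i"
  using back_arrow unfolding before_def .

lemma before_first: "before (Suc ell) 1"
  using first_arrow unfolding before_def .

lemma same_cell_iff:
  "a \<in> {1..N} \<Longrightarrow> b \<in> {1..N} \<Longrightarrow> same_cell a b \<longleftrightarrow> a mod ell = b mod ell"
  unfolding same_cell_def by (rule same_cell_iff_mod)

lemma before_same_line: "before a b \<Longrightarrow> col a = col b \<or> row a = row b"
  unfolding before_def using col_before_same_col row_before_same_row by blast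

lemma before_in_cell:
  assumes "a \<in> {1..N}" "b \<in> {1..N}" "same_cell a b" "before a b"
  shows "col_before a b \<and> row_before a b"
  using assms col_before_iff_row_before unfolding before_def same_cell_def by blast

lemma before_asym:
  assumes "a \<in> {1..N}" "b \<in> {1..N}" "before a b"
  shows "\<not> before b a"
proof
  assume ba: "before b a"
  show False
  proof (cases "same_cell a b")
    case True
    then have "same_cell b a" unfolding same_cell_def by simp
    then have "col_before a b" "col_before b a"
      using assms ba True before_in_cell by blast+
    then show False using col_before_asym by blast
  next
    case False
    then have "\<not> (col_before a b \<and> row_before b a)" "\<not> (row_before a b \<and> col_before b a)"
      using col_before_same_col row_before_same_row unfolding same_cell_def by metis+
    then show False using assms(3) ba col_before_asym row_before_asym unfolding before_def by blast
  qed
qed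

lemma before_trans_same_cell_left:
  assumes "a \<in> {1..N}" "b \<in> {1..N}" "same_cell a b" "before a b" "before b c"
  shows "before a c"
  using assms before_in_cell[of a b] col_before_trans row_before_trans
  unfolding before_def by blast

lemma before_trans_same_cell_right:
  assumes "b \<in> {1..N}" "c \<in> {1..N}" "same_cell b c" "before a b" "before b c"
  shows "before a c"
  using assms before_in_cell[of b c] col_before_trans row_before_trans
  unfolding before_def by blast

lemma before_trans:
  assumes "a \<in> {1..N}" "b \<in> {1..N}" "c \<in> {1..N}" "before a b" "before b c"
    and "same_cell a b \<or> same_cell b c \<or> same_cell a c"
  shows "before a c"
proof -
  from assms(4,5) consider "col_before a b" "col_before b c" | "row_before a b" "row_before b c"
    | "col_before a b \<and> row_before b c \<or> row_before a b \<and> col_before b c"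
    unfolding before_def by blast
  then show ?thesis
  proof cases
    case 3
    then have "\<not> same_cell a c \<or> same_cell a b"
      using col_before_same_col row_before_same_row unfolding same_cell_def by metis
    then have "same_cell a b \<or> same_cell b c" using assms(6) by blast
    then show ?thesis
      using before_trans_same_cell_left[OF assms(1,2) _ assms(4,5)]
        before_trans_same_cell_right[OF assms(2,3) _ assms(4,5)] by blast
  qed (use col_before_trans row_before_trans before_def in blast)+
qed

lemma before_add_cycle_len:
  assumes "1 \<le> a" and "a + ell \<le> N"
  shows "before (a + ell) a"
proof (cases "a = 1")
  case True
  then show ?thesis using before_first by simp
next
  case False
  have "before (a + ell) (a - 1)" using before_back[of "a - 1"] assms False by simp
  moreover have "before (a - 1) a" using before_Suc[of "a - 1"] assms False cycle_len_ge_3 by simp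
  moreover have "same_cell (a + ell) (a - 1) \<or> same_cell (a - 1) a \<or> same_cell (a + ell) a"
    using same_cell_iff[of "a + ell" a] assms by simp
  moreover have "a + ell \<in> {1..N}" "a - 1 \<in> {1..N}" "a \<in> {1..N}" using assms False by auto
  ultimately show ?thesis using before_trans by blast
qed

lemma before_earlier_copy:
  assumes "1 \<le> a" and "a < b" and "b \<le> N" and "a mod ell = b mod ell"
  shows "before b a"
  using assms
proof (induction b rule: less_induct)
  case (less b)
  have "a + ell \<le> b" using mod_eq_less_imp_add_le less.prems(2,4) .
  then have b_before: "before b (b - ell)"
    using before_add_cycle_len[of "b - ell"] less.prems by simp
  have mod_eq: "(b - ell) mod ell = b mod ell" using \<open>a + ell \<le> b\<close> by (simp add: le_mod_geq)
  show ?case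
  proof (cases "b - ell = a")
    case True
    with b_before show ?thesis by simp
  next
    case False
    then have "before (b - ell) a"
      using less.IH[of "b - ell"] less.prems \<open>a + ell \<le> b\<close> mod_eq cycle_len_ge_3 by simp
    moreover have range: "b \<in> {1..N}" "b - ell \<in> {1..N}" "a \<in> {1..N}"
      using less.prems \<open>a + ell \<le> b\<close> by auto
    moreover have "same_cell b (b - ell)" using same_cell_iff[OF range(1,2)] mod_eq by simp
    ultimately show ?thesis using before_trans b_before by blast
  qed
qed

lemma before_to_earlier_copy:
  assumes "a \<in> {1..N}" "b \<le> N" "1 \<le> c" "c \<le> b" "c mod ell = b mod ell" "before a b"
  shows "before a c"
proof (cases "c = b")
  case False
  then have "before b c" using before_earlier_copy assms by simp
  moreover have "same_cell b c" using same_cell_iff assms by simp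
  ultimately show ?thesis using before_trans[of a b c] assms by simp
qed (use assms in simp)

lemma before_from_later_copy:
  assumes "1 \<le> b" "b \<le> a" "a \<le> N" "a mod ell = b mod ell" "c \<in> {1..N}" "before b c"
  shows "before a c"
proof (cases "a = b")
  case False
  then have "before a b" using before_earlier_copy assms by simp
  moreover have "same_cell a b" using same_cell_iff assms by simp
  ultimately show ?thesis using before_trans[of a b c] assms by simp
qed (use assms in simp)

lemma before_same_cell_imp_less:
  assumes "a \<in> {1..N}" "b \<in> {1..N}" "before a b" "a mod ell = b mod ell"
  shows "b < a"
proof (rule ccontr)
  assume "\<not> b < a"
  then have "a = b \<or> a < b" by auto
  then have "before b a" using before_earlier_copy assms by auto
  then show False using before_asym assms by blast
qed

lemma col_partner_unique:
  assumes "x \<in> {1..N}" "y \<in> {1..N}" "z \<in> {1..N}" "col x = col y" "col x = col z"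
    and "\<not> same_cell x y" "\<not> same_cell x z"
  shows "same_cell y z"
  using col_meets_two_rows[OF assms(1-3)] assms(4-7) unfolding same_cell_def by auto

lemma row_partner_unique:
  assumes "x \<in> {1..N}" "y \<in> {1..N}" "z \<in> {1..N}" "row x = row y" "row x = row z"
    and "\<not> same_cell x y" "\<not> same_cell x z"
  shows "same_cell y z"
  using row_meets_two_cols[OF assms(1-3)] assms(4-7) unfolding same_cell_def by auto

lemma successor_cells_share_line:
  assumes "a \<in> {1..N}" "b \<in> {1..N}" "b mod ell = Suc a mod ell"
  shows "col a = col b \<or> row a = row b"
proof -
  obtain x where x: "x \<in> {1..ell}" "x mod ell = a mod ell"
    using obtain_mod_representative cycle_len_ge_3 by (metis less_le_trans zero_less_numeral)
  have "col x = col (Suc x) \<or> row x = row (Suc x)"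
    using before_same_line before_Suc[of x] x cycle_len_less by simp
  moreover have "same_cell a x" using same_cell_iff assms x cycle_len_less by simp
  moreover have "same_cell b (Suc x)"
    using same_cell_iff assms x cycle_len_less Suc_mod_cancel by simp
  ultimately show ?thesis unfolding same_cell_def by auto
qed

text \<open>The cell of \<open>a\<close> shares a line with the cells of its predecessor and its successor, and
  a column or row meets at most two cycle cells, so no third cell can share a line with it.\<close>

lemma line_sharing_cells_consecutive:
  assumes "a \<in> {1..N}" "b \<in> {1..N}" "\<not> same_cell a b" "col a = col b \<or> row a = row b"
  shows "b mod ell = Suc a mod ell \<or> a mod ell = Suc b mod ell"
proof (rule ccontr)
  assume not_consecutive: "\<not> ?thesis"
  have ell_pos: "0 < ell" using cycle_len_ge_3 by simp
  obtain x where x: "x \<in> {1..ell}" "x mod ell = Suc a mod ell"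
    using obtain_mod_representative ell_pos by blast
  obtain z where z: "z \<in> {1..ell}" "z mod ell = (a + (ell - 1)) mod ell"
    using obtain_mod_representative ell_pos by blast
  have "Suc z mod ell = Suc (a + (ell - 1)) mod ell" using z(2) Suc_mod_cancel by blast
  then have Suc_z: "Suc z mod ell = a mod ell" using ell_pos by simp
  have range: "x \<in> {1..N}" "z \<in> {1..N}" using x z cycle_len_less by auto
  have lines: "col a = col x \<or> row a = row x" "col a = col z \<or> row a = row z"
    using successor_cells_share_line[OF assms(1) range(1)] x(2)
      successor_cells_share_line[OF range(2) assms(1)] Suc_z by auto
  have neq: "Suc a mod ell \<noteq> a mod ell" "Suc z mod ell \<noteq> z mod ell"
    "Suc (Suc z) mod ell \<noteq> z mod ell"
    using mod_add_neq_self[of 1 ell] mod_add_neq_self[of 2 ell] cycle_len_ge_3 by simp_all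
  have "Suc a mod ell = Suc (Suc z) mod ell" using Suc_z Suc_mod_cancel by metis
  then have distinct: "\<not> same_cell a x" "\<not> same_cell a z" "\<not> same_cell x z"
    "\<not> same_cell b x" "\<not> same_cell b z"
    using same_cell_iff[OF assms(1) range(1)] same_cell_iff[OF assms(1) range(2)]
      same_cell_iff[OF range] same_cell_iff[OF assms(2) range(1)] same_cell_iff[OF assms(2) range(2)]
      x(2) Suc_z neq not_consecutive Suc_mod_cancel[of b ell z] by auto
  have "same_cell y y'"
    if "y \<in> {1..N}" "y' \<in> {1..N}" "\<not> same_cell a y" "\<not> same_cell a y'"
      "col a = col y \<and> col a = col y' \<or> row a = row y \<and> row a = row y'" for y y'
    using that col_partner_unique[OF assms(1)] row_partner_unique[OF assms(1)] by blast
  then show False using distinct lines assms range by blast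
qed

lemma before_successor_copy:
  assumes "a \<in> {1..N}" "b \<in> {1..N}" "a mod ell = Suc b mod ell" "a \<le> Suc b"
  shows "before b a"
proof -
  \<comment> \<open>a copy of \<open>b\<close> that has a successor; for \<open>b = N\<close> the previous copy \<open>N - ell\<close>\<close>
  obtain s where s: "1 \<le> s" "s \<le> b" "s < N" "s mod ell = b mod ell" "a \<le> Suc s"
  proof (cases "b < N")
    case True
    then show thesis using that[of b] assms by simp
  next
    case False
    then have "b = N" using assms(2) by simp
    moreover have "a + ell \<le> Suc b"
      using mod_eq_less_imp_add_le[of a "Suc b" ell] assms False by simp
    ultimately show thesis
      using that[of "N - ell"] cycle_len_less cycle_len_ge_3 by (simp add: le_mod_geq)
  qed
  have "before b (Suc s)"
    using before_from_later_copy[of s b "Suc s"] before_Suc[of s] s assms(2) by simp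
  moreover have "a mod ell = Suc s mod ell" using assms(3) s(4) Suc_mod_cancel by metis
  ultimately show ?thesis
    using before_to_earlier_copy[of b "Suc s" a] s assms by simp
qed

lemma before_successor_cell_far:
  assumes "a \<in> {1..N}" "b \<in> {1..N}" "before a b" "a mod ell = Suc b mod ell"
  shows "Suc b + ell \<le> a"
proof -
  have "\<not> a \<le> Suc b" using before_successor_copy before_asym assms by blast
  then show ?thesis using mod_eq_less_imp_add_le[of "Suc b" a ell] assms(4) by simp
qed

lemma before_imp_le_Suc:
  assumes "a \<in> {1..N}" "b \<in> {1..N}" "before a b"
  shows "b \<le> Suc a"
proof (cases "same_cell a b")
  case True
  then show ?thesis using before_same_cell_imp_less same_cell_iff assms by fastforce
next
  case False
  then consider "b mod ell = Suc a mod ell" | "a mod ell = Suc b mod ell"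
    using line_sharing_cells_consecutive before_same_line assms by blast
  then show ?thesis
  proof cases
    case 1
    show ?thesis
    proof (rule ccontr)
      assume "\<not> b \<le> Suc a"
      then have far: "Suc a + ell \<le> b" using mod_eq_less_imp_add_le[of "Suc a" b ell] 1 by simp
      define j where "j = b - Suc ell"
      have b_eq: "b = Suc (j + ell)" using far unfolding j_def by simp
      have "before b j" using before_back[of j] b_eq far assms(1,2) by simp
      moreover have "j mod ell = a mod ell"
        using 1 b_eq Suc_mod_cancel by (metis add_Suc mod_add_self2)
      ultimately have "before b a"
        using before_to_earlier_copy[of b j a] assms b_eq far by simp
      then show False using before_asym assms by blast
    qed
  qed (use before_successor_cell_far assms in fastforce)
qed

end

text \<open>The image of a coil of length \<open>m\<close>: its t-th point is sent to the \<open>g t\<close>-th point.\<close>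

locale abstract_coil_map = abstract_coil +
  fixes m :: nat and g :: "nat \<Rightarrow> nat"
  assumes cycle_len_less_domain: "ell < m"
    and map_range: "t \<in> {1..m} \<Longrightarrow> g t \<in> {1..N}"
    and map_mod_cong:
      "s \<in> {1..m} \<Longrightarrow> t \<in> {1..m} \<Longrightarrow> s mod ell = t mod ell \<Longrightarrow> g s mod ell = g t mod ell"
    and map_before_Suc: "1 \<le> t \<Longrightarrow> t < m \<Longrightarrow> before (g t) (g (Suc t))"
    and map_before_back: "1 \<le> t \<Longrightarrow> t + ell < m \<Longrightarrow> before (g (Suc (t + ell))) (g t)"
    and map_before_first: "before (g (Suc ell)) (g 1)"
begin

lemma map_Suc_le: "1 \<le> t \<Longrightarrow> t < m \<Longrightarrow> g (Suc t) \<le> Suc (g t)"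
  using before_imp_le_Suc map_range map_before_Suc by simp

lemma map_add_le: "1 \<le> s \<Longrightarrow> s + d \<le> m \<Longrightarrow> g (s + d) \<le> g s + d"
proof (induction d)
  case (Suc d)
  then show ?case using map_Suc_le[of "s + d"] by simp
qed simp

lemma map_first_period: "g 1 + ell \<le> g (Suc ell)"
proof -
  have range: "1 \<in> {1..m}" "Suc ell \<in> {1..m}" using cycle_len_less_domain by auto
  have "Suc ell mod ell = 1 mod ell" using mod_add_self1[of ell 1] by simp
  then have cong: "g (Suc ell) mod ell = g 1 mod ell" using map_mod_cong[OF range(2,1)] by blast
  have "g 1 < g (Suc ell)"
    using before_same_cell_imp_less[OF map_range[OF range(2)] map_range[OF range(1)]
        map_before_first cong] .
  then show ?thesis using mod_eq_less_imp_add_le[of "g 1" "g (Suc ell)" ell] cong by simp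
qed

lemma map_shift_initial:
  assumes "t \<in> {1..Suc ell}"
  shows "g t + 1 = g 1 + t"
proof -
  have t: "1 \<le> t" "t \<le> Suc ell" using assms by simp_all
  have "g (1 + (t - 1)) \<le> g 1 + (t - 1)" using map_add_le[of 1 "t - 1"] t cycle_len_less_domain by simp
  moreover have "g (t + (Suc ell - t)) \<le> g t + (Suc ell - t)"
    using map_add_le[of t "Suc ell - t"] t cycle_len_less_domain by simp
  ultimately have "g t \<le> g 1 + (t - 1)" "g (Suc ell) \<le> g t + (Suc ell - t)" using t by simp_all
  then show ?thesis using map_first_period t by linarith
qed

lemma map_shift:
  assumes "t \<in> {1..m}"
  shows "g t + 1 = g 1 + t"
  using assms
proof (induction t rule: less_induct)
  case (less t)
  show ?case
  proof (cases "t \<le> Suc ell")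
    case True
    then show ?thesis using map_shift_initial less.prems by simp
  next
    case False
    define s where "s = t - Suc ell"
    have t_eq: "t = Suc (s + ell)" and s_pos: "1 \<le> s" using False unfolding s_def by simp_all
    have range: "t \<in> {1..m}" "Suc s \<in> {1..m}" "s \<in> {1..m}" "t - 1 \<in> {1..m}"
      using less.prems t_eq s_pos by auto
    have shift_s: "g s + 1 = g 1 + s" and shift_Suc_s: "g (Suc s) + 1 = g 1 + Suc s"
      and shift_pred: "g (t - 1) + 1 = g 1 + (t - 1)"
      using less.IH range t_eq cycle_len_ge_3 by simp_all
    have "t mod ell = Suc s mod ell" unfolding t_eq by (metis add_Suc mod_add_self2)
    then have "g t mod ell = g (Suc s) mod ell" using map_mod_cong range by blast
    then have "g t mod ell = Suc (g s) mod ell" using shift_s shift_Suc_s by simp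
    \<comment> \<open>the back arrow bounds \<open>g t\<close> from below, the step arrow from above\<close>
    then have "Suc (g s) + ell \<le> g t"
      using before_successor_cell_far map_before_back[of s] map_range range t_eq s_pos by simp
    moreover have "g t \<le> Suc (g (t - 1))" using map_Suc_le[of "t - 1"] range t_eq by simp
    moreover have "t - 1 = s + ell" using t_eq by simp
    ultimately show ?thesis using shift_s shift_pred t_eq by linarith
  qed
qed

end

section \<open>Gridded permutations and the cycle of the row-column graph\<close>

lemma strip_index_unique:
  fixes v :: "nat \<Rightarrow> real"
  assumes mono: "\<forall>k<p. v k \<le> v (Suc k)"
    and "i \<in> {1..p}" "i' \<in> {1..p}"
    and "v (i - 1) < x" "x < v i" "v (i' - 1) < x" "x < v i'"
  shows "i = i'"
proof (rule ccontr)
  have mono_le: "v a \<le> v b" if "a \<le> b" "b \<le> p" for a b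
  proof -
    have "{a..<b} \<subseteq> {..<p}" using that(2) by auto
    then show ?thesis using lift_Suc_mono_le_ivl[of "{..<p}" v a b] mono that(1) by blast
  qed
  assume "i \<noteq> i'"
  then have "i \<le> i' - 1 \<or> i' \<le> i - 1" by arith
  then show False using assms(2-7) by (auto dest: mono_le)
qed

lemma gridded_cell_unique:
  assumes "gridded M p q L pi v h"
    and "i \<in> {1..p}" "j \<in> {1..q}" "i' \<in> {1..p}" "j' \<in> {1..q}"
    and "in_cell v h pi i j x" "in_cell v h pi i' j' x"
  shows "i = i' \<and> j = j'"
proof -
  have "\<forall>k<p. v k \<le> v (Suc k)" "\<forall>k<q. h k \<le> h (Suc k)"
    using assms(1) unfolding gridded_def by simp_all
  then show ?thesis
    using strip_index_unique[of p v i i' "real x"] strip_index_unique[of q h j j' "real (pi x)"] assms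
    unfolding in_cell_def by blast
qed

lemma gridded_cell_order:
  assumes "gridded M p q L pi v h" "i \<in> {1..p}" "j \<in> {1..q}" "M i j = 1 \<or> M i j = -1"
    and "x \<in> {1..L}" "y \<in> {1..L}" "in_cell v h pi i j x" "in_cell v h pi i j y" "x \<noteq> y"
  shows "(x < y \<longleftrightarrow> pi x < pi y) \<longleftrightarrow> M i j = 1"
proof -
  have monotone: "M i j = 1 \<Longrightarrow> pi a < pi b" "M i j = -1 \<Longrightarrow> pi b < pi a"
    if "a \<in> {x, y}" "b \<in> {x, y}" "a < b" for a b
    using assms(1-3,5-8) that unfolding gridded_def by blast+
  show ?thesis
  proof (cases "x < y")
    case True
    then show ?thesis using monotone[of x y] assms(4) by auto
  next
    case False
    then have "y < x" using assms(9) by simp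
    then show ?thesis using monotone[of y x] assms(4) by auto
  qed
qed

lemma unicyclic_obtain_cycle:
  assumes "unicyclic M p q"
  obtains ws where "is_cycle (rc_edges M p q) ws" and "the_cycle M p q = cycle_edges ws"
proof -
  have "the_cycle M p q \<in> cycles_of (rc_edges M p q)"
    using assms unfolding unicyclic_def the_cycle_def by (rule theI')
  then show thesis using that unfolding cycles_of_def by blast
qed

lemma cycle_cells_nonzero:
  assumes "unicyclic M p q" "(i, j) \<in> cycle_cells M p q"
  shows "i \<in> {1..p} \<and> j \<in> {1..q} \<and> M i j \<noteq> 0"
proof -
  obtain ws where ws: "is_cycle (rc_edges M p q) ws" "the_cycle M p q = cycle_edges ws"
    using unicyclic_obtain_cycle[OF assms(1)] .
  have "{Inl i, Inr j} \<in> cycle_edges ws" using assms(2) ws(2) unfolding cycle_cells_def by simp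
  then have "{Inl i, Inr j} \<in> rc_edges M p q" using ws(1) unfolding cycle_edges_def is_cycle_def by auto
  then show ?thesis unfolding rc_edges_def by (auto simp: doubleton_eq_iff)
qed

lemma card_cycle_edges:
  assumes "distinct ws" "3 \<le> length ws"
  shows "card (cycle_edges ws) = length ws"
proof -
  let ?L = "length ws"
  define e where "e k = {ws ! k, ws ! (Suc k mod ?L)}" for k
  have nth_inj: "k = k'" if "k < ?L" "k' < ?L" "ws ! k = ws ! k'" for k k'
    using assms(1) that nth_eq_iff_index_eq by blast
  have "inj_on e {..<?L}"
  proof
    fix k k' assume k: "k \<in> {..<?L}" "k' \<in> {..<?L}" "e k = e k'"
    have Suc_mod_less: "Suc i mod ?L < ?L" for i using assms(2) by (auto intro: mod_less_divisor)
    consider "ws ! k = ws ! k'" | "ws ! k = ws ! (Suc k' mod ?L)" "ws ! (Suc k mod ?L) = ws ! k'"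
      using k(3) unfolding e_def by (auto simp: doubleton_eq_iff)
    then show "k = k'"
    proof cases
      case 2
      then have "k = Suc k' mod ?L" "Suc k mod ?L = k'" using nth_inj k(1,2) Suc_mod_less by auto
      then have "(k' + 2) mod ?L = k' mod ?L" using k(2) by (simp add: mod_Suc_eq)
      then show ?thesis using mod_add_neq_self[of 2 ?L k'] assms(2) by simp
    qed (use nth_inj k in simp)
  qed
  moreover have "cycle_edges ws = e ` {..<?L}" unfolding cycle_edges_def e_def by auto
  ultimately show ?thesis by (simp add: card_image)
qed

lemma unicyclic_cycle_len_ge_3:
  assumes "unicyclic M p q"
  shows "3 \<le> cycle_len M p q"
proof -
  obtain ws where ws: "is_cycle (rc_edges M p q) ws" "the_cycle M p q = cycle_edges ws"
    using unicyclic_obtain_cycle[OF assms] .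
  then have "distinct ws" "3 \<le> length ws" unfolding is_cycle_def by simp_all
  then show ?thesis using card_cycle_edges[of ws] ws(2) unfolding cycle_len_def by simp
qed

lemma cycle_vertex_in_two_edges:
  assumes "distinct ws" "e1 \<in> cycle_edges ws" "e2 \<in> cycle_edges ws" "e3 \<in> cycle_edges ws"
    and "x \<in> e1" "x \<in> e2" "x \<in> e3"
  shows "e1 = e2 \<or> e2 = e3 \<or> e1 = e3"
proof -
  let ?L = "length ws"
  obtain k1 k2 k3 where k: "k1 < ?L" "k2 < ?L" "k3 < ?L"
    "e1 = {ws ! k1, ws ! (Suc k1 mod ?L)}" "e2 = {ws ! k2, ws ! (Suc k2 mod ?L)}"
    "e3 = {ws ! k3, ws ! (Suc k3 mod ?L)}"
    using assms(2-4) unfolding cycle_edges_def by auto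
  have nth_inj: "k = k'" if "k < ?L" "k' < ?L" "ws ! k = ws ! k'" for k k'
    using assms(1) that nth_eq_iff_index_eq by blast
  have start_unique: "k = k'" if "k < ?L" "k' < ?L" "ws ! k = x" "ws ! k' = x" for k k'
    using nth_inj that by metis
  have end_unique: "k = k'"
    if "k < ?L" "k' < ?L" "ws ! (Suc k mod ?L) = x" "ws ! (Suc k' mod ?L) = x" for k k'
  proof -
    have "0 < ?L" using that(1) by linarith
    then have "Suc k mod ?L < ?L" "Suc k' mod ?L < ?L" by simp_all
    then have "Suc k mod ?L = Suc k' mod ?L" using nth_inj that(3,4) by metis
    then show ?thesis using that(1,2) Suc_mod_cancel by simp
  qed
  have "ws ! k1 = x \<or> ws ! (Suc k1 mod ?L) = x" "ws ! k2 = x \<or> ws ! (Suc k2 mod ?L) = x"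
    "ws ! k3 = x \<or> ws ! (Suc k3 mod ?L) = x"
    using k(4-6) assms(5-7) by auto
  then have "k1 = k2 \<or> k2 = k3 \<or> k1 = k3"
    using start_unique end_unique k(1-3) by metis
  then show ?thesis using k by auto
qed

lemma cycle_cells_col_two_rows:
  assumes "unicyclic M p q"
    and "(i, j1) \<in> cycle_cells M p q" "(i, j2) \<in> cycle_cells M p q" "(i, j3) \<in> cycle_cells M p q"
  shows "j1 = j2 \<or> j2 = j3 \<or> j1 = j3"
proof -
  obtain ws where ws: "is_cycle (rc_edges M p q) ws" "the_cycle M p q = cycle_edges ws"
    using unicyclic_obtain_cycle[OF assms(1)] .
  have "distinct ws" using ws(1) unfolding is_cycle_def by simp
  moreover have "{Inl i, Inr j1} \<in> cycle_edges ws" "{Inl i, Inr j2} \<in> cycle_edges ws"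
    "{Inl i, Inr j3} \<in> cycle_edges ws"
    using assms(2-4) ws(2) unfolding cycle_cells_def by simp_all
  ultimately have "{Inl i, Inr j1} = {Inl i, Inr j2} \<or> {Inl i, Inr j2} = {Inl i, Inr j3}
      \<or> {Inl i, Inr j1} = {Inl i, Inr j3}"
    by (rule cycle_vertex_in_two_edges[where x = "Inl i"]) simp_all
  then show ?thesis by (simp add: doubleton_eq_iff)
qed

lemma cycle_cells_row_two_cols:
  assumes "unicyclic M p q"
    and "(i1, j) \<in> cycle_cells M p q" "(i2, j) \<in> cycle_cells M p q" "(i3, j) \<in> cycle_cells M p q"
  shows "i1 = i2 \<or> i2 = i3 \<or> i1 = i3"
proof -
  obtain ws where ws: "is_cycle (rc_edges M p q) ws" "the_cycle M p q = cycle_edges ws"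
    using unicyclic_obtain_cycle[OF assms(1)] .
  have "distinct ws" using ws(1) unfolding is_cycle_def by simp
  moreover have "{Inl i1, Inr j} \<in> cycle_edges ws" "{Inl i2, Inr j} \<in> cycle_edges ws"
    "{Inl i3, Inr j} \<in> cycle_edges ws"
    using assms(2-4) ws(2) unfolding cycle_cells_def by simp_all
  ultimately have "{Inl i1, Inr j} = {Inl i2, Inr j} \<or> {Inl i2, Inr j} = {Inl i3, Inr j}
      \<or> {Inl i1, Inr j} = {Inl i3, Inr j}"
    by (rule cycle_vertex_in_two_edges[where x = "Inr j"]) simp_all
  then show ?thesis by (simp add: doubleton_eq_iff)
qed

locale unicyclic_coil =
  fixes M :: "nat \<Rightarrow> nat \<Rightarrow> int" and p q :: nat and c r :: "nat \<Rightarrow> int" and N :: nat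
    and pi :: "nat \<Rightarrow> nat" and v h :: "nat \<Rightarrow> real" and w :: "nat \<Rightarrow> nat"
    and lab :: "nat \<times> nat \<Rightarrow> nat"
  assumes partial_mult: "partial_mult_matrix M p q c r"
    and unicyclic: "unicyclic M p q"
    and coil: "gridded_coil M p q c r N pi v h w lab"
begin

abbreviation ell :: nat where "ell \<equiv> cycle_len M p q"

lemma gridded: "gridded M p q N pi v h"
  and cycle_len_less_length: "ell < N"
  and bij_w: "bij_betw w {1..N} {1..N}"
  and bij_lab: "bij_betw lab (cycle_cells M p q) {1..ell}"
  and point_in_cycle_cell: "a \<in> {1..N} \<Longrightarrow> \<exists>ij\<in>cycle_cells M p q.
      in_cell v h pi (fst ij) (snd ij) (w a) \<and> lab ij = (a - 1) mod ell + 1"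
  and arrow_first: "orient_arrow p q c r v h pi (w (Suc ell)) (w 1)"
  using coil unfolding gridded_coil_def Let_def by auto

lemma arrow_Suc:
  assumes "1 \<le> a" "a < N"
  shows "orient_arrow p q c r v h pi (w a) (w (Suc a))"
proof -
  have "\<forall>i. 1 < i \<and> i \<le> N \<longrightarrow> orient_arrow p q c r v h pi (w (i - 1)) (w i)"
    using coil unfolding gridded_coil_def Let_def by blast
  from this[rule_format, of "Suc a"] show ?thesis using assms by simp
qed

lemma arrow_back:
  assumes "1 \<le> a" "a + ell < N"
  shows "orient_arrow p q c r v h pi (w (Suc (a + ell))) (w a)"
proof -
  have "\<forall>i. ell + 1 < i \<and> i \<le> N \<longrightarrow> orient_arrow p q c r v h pi (w i) (w (i - ell - 1))"
    using coil unfolding gridded_coil_def Let_def by blast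
  from this[rule_format, of "Suc (a + ell)"] show ?thesis using assms by simp
qed

definition cell_of :: "nat \<Rightarrow> nat \<times> nat" where
  "cell_of a = (SOME ij. ij \<in> cycle_cells M p q \<and> in_cell v h pi (fst ij) (snd ij) (w a))"

definition col_of :: "nat \<Rightarrow> nat" where "col_of a = fst (cell_of a)"

definition row_of :: "nat \<Rightarrow> nat" where "row_of a = snd (cell_of a)"

definition col_before :: "nat \<Rightarrow> nat \<Rightarrow> bool" where
  "col_before a b \<longleftrightarrow> col_of a = col_of b
     \<and> (c (col_of a) = 1 \<and> w a < w b \<or> c (col_of a) = -1 \<and> w b < w a)"

definition row_before :: "nat \<Rightarrow> nat \<Rightarrow> bool" where
  "row_before a b \<longleftrightarrow> row_of a = row_of b
     \<and> (r (row_of a) = 1 \<and> pi (w a) < pi (w b) \<or> r (row_of a) = -1 \<and> pi (w b) < pi (w a))"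

lemma w_range: "a \<in> {1..N} \<Longrightarrow> w a \<in> {1..N}"
  using bij_w by (rule bij_betw_apply)

lemma cycle_cell_in_range:
  "ij \<in> cycle_cells M p q \<Longrightarrow> fst ij \<in> {1..p} \<and> snd ij \<in> {1..q} \<and> M (fst ij) (snd ij) \<noteq> 0"
  using cycle_cells_nonzero[OF unicyclic, of "fst ij" "snd ij"] by simp

lemma cell_of_unique:
  assumes "ij \<in> cycle_cells M p q" "in_cell v h pi (fst ij) (snd ij) (w a)"
    and "ij' \<in> cycle_cells M p q" "in_cell v h pi (fst ij') (snd ij') (w a)"
  shows "ij = ij'"
  using gridded_cell_unique[OF gridded] cycle_cell_in_range assms by (metis prod_eq_iff)

lemma cell_of:
  assumes "a \<in> {1..N}"
  shows cell_of_in_cycle_cells: "cell_of a \<in> cycle_cells M p q"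
    and in_cell_of: "in_cell v h pi (col_of a) (row_of a) (w a)"
    and lab_cell_of: "lab (cell_of a) = (a - 1) mod ell + 1"
proof -
  obtain ij where ij: "ij \<in> cycle_cells M p q" "in_cell v h pi (fst ij) (snd ij) (w a)"
    "lab ij = (a - 1) mod ell + 1"
    using point_in_cycle_cell[OF assms] by blast
  then have "\<exists>ij. ij \<in> cycle_cells M p q \<and> in_cell v h pi (fst ij) (snd ij) (w a)" by blast
  then have "cell_of a \<in> cycle_cells M p q \<and> in_cell v h pi (fst (cell_of a)) (snd (cell_of a)) (w a)"
    unfolding cell_of_def by (rule someI_ex)
  moreover from this have "cell_of a = ij" using cell_of_unique ij by blast
  ultimately show "cell_of a \<in> cycle_cells M p q" "in_cell v h pi (col_of a) (row_of a) (w a)"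
    and "lab (cell_of a) = (a - 1) mod ell + 1"
    using ij unfolding col_of_def row_of_def by simp_all
qed

lemma cell_of_eq:
  assumes "a \<in> {1..N}" "ij \<in> cycle_cells M p q" "in_cell v h pi (fst ij) (snd ij) (w a)"
  shows "cell_of a = ij"
  using cell_of[OF assms(1)] cell_of_unique assms(2,3) unfolding col_of_def row_of_def by blast

lemma cell_of_eq_iff_mod:
  assumes "a \<in> {1..N}" "b \<in> {1..N}"
  shows "cell_of a = cell_of b \<longleftrightarrow> a mod ell = b mod ell"
proof -
  have "cell_of a = cell_of b \<longleftrightarrow> lab (cell_of a) = lab (cell_of b)"
    using bij_lab cell_of_in_cycle_cells assms unfolding bij_betw_def inj_on_def by metis
  also have "\<dots> \<longleftrightarrow> (a - 1) mod ell = (b - 1) mod ell" using lab_cell_of assms by simp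
  also have "\<dots> \<longleftrightarrow> a mod ell = b mod ell"
    using Suc_mod_cancel[of "a - 1" ell "b - 1"] assms by simp
  finally show ?thesis .
qed

lemma cell_of_in_range:
  assumes "a \<in> {1..N}"
  shows "col_of a \<in> {1..p}" "row_of a \<in> {1..q}" "M (col_of a) (row_of a) \<noteq> 0"
  using cycle_cell_in_range[OF cell_of_in_cycle_cells[OF assms]] unfolding col_of_def row_of_def
  by simp_all

lemma col_of_eq:
  assumes "a \<in> {1..N}" "i \<in> {1..p}" "v (i - 1) < real (w a)" "real (w a) < v i"
  shows "col_of a = i"
proof -
  have "\<forall>k<p. v k \<le> v (Suc k)" using gridded unfolding gridded_def by simp
  then show ?thesis
    using strip_index_unique cell_of_in_range(1)[OF assms(1)] in_cell_of[OF assms(1)] assms(2-4)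
    unfolding in_cell_def by blast
qed

lemma row_of_eq:
  assumes "a \<in> {1..N}" "j \<in> {1..q}" "h (j - 1) < real (pi (w a))" "real (pi (w a)) < h j"
  shows "row_of a = j"
proof -
  have "\<forall>k<q. h k \<le> h (Suc k)" using gridded unfolding gridded_def by simp
  then show ?thesis
    using strip_index_unique cell_of_in_range(2)[OF assms(1)] in_cell_of[OF assms(1)] assms(2-4)
    unfolding in_cell_def by blast
qed

lemma orient_arrow_imp_before:
  assumes "a \<in> {1..N}" "b \<in> {1..N}" "orient_arrow p q c r v h pi (w a) (w b)"
  shows "col_before a b \<or> row_before a b"
proof -
  from assms(3) consider (col) i where "i \<in> {1..p}" "v (i - 1) < real (w a)" "real (w a) < v i"
      "v (i - 1) < real (w b)" "real (w b) < v i" "c i = 1 \<and> w a < w b \<or> c i = -1 \<and> w b < w a"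
    | (row) j where "j \<in> {1..q}" "h (j - 1) < real (pi (w a))" "real (pi (w a)) < h j"
      "h (j - 1) < real (pi (w b))" "real (pi (w b)) < h j"
      "r j = 1 \<and> pi (w a) < pi (w b) \<or> r j = -1 \<and> pi (w b) < pi (w a)"
    unfolding orient_arrow_def by blast
  then show ?thesis
  proof cases
    case col
    then show ?thesis using col_of_eq assms(1,2) unfolding col_before_def by metis
  next
    case row
    then show ?thesis using row_of_eq assms(1,2) unfolding row_before_def by metis
  qed
qed

text \<open>Since \<open>M i j = c i * r j\<close>, the orientations of column i and row j agree on cell (i, j)
  exactly when the cell is increasing.\<close>

lemma col_before_iff_row_before_in_cell:
  assumes "a \<in> {1..N}" "b \<in> {1..N}" "col_of a = col_of b" "row_of a = row_of b"
  shows "col_before a b \<longleftrightarrow> row_before a b"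
proof (cases "w a = w b")
  case False
  let ?i = "col_of a" and ?j = "row_of a"
  have sign: "M ?i ?j = c ?i * r ?j" "c ?i = 1 \<or> c ?i = -1" "r ?j = 1 \<or> r ?j = -1"
    using partial_mult cell_of_in_range[OF assms(1)] unfolding partial_mult_matrix_def by auto
  have in_cell: "in_cell v h pi ?i ?j (w a)" "in_cell v h pi ?i ?j (w b)"
    using in_cell_of[OF assms(1)] in_cell_of[OF assms(2)] assms(3,4) by simp_all
  have order: "(w a < w b \<longleftrightarrow> pi (w a) < pi (w b)) \<longleftrightarrow> M ?i ?j = 1"
    by (rule gridded_cell_order[OF gridded cell_of_in_range(1,2)[OF assms(1)] _
          w_range[OF assms(1)] w_range[OF assms(2)] in_cell False])
      (use sign in auto)
  have "inj_on pi {1..N}" using gridded unfolding gridded_def is_perm_def bij_betw_def by simp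
  then have "pi (w a) \<noteq> pi (w b)"
    using inj_on_eq_iff[OF _ w_range[OF assms(1)] w_range[OF assms(2)]] False by blast
  then have "row_before a b \<longleftrightarrow> (pi (w a) < pi (w b) \<longleftrightarrow> r ?j = 1)"
    using sign(3) assms(4) unfolding row_before_def by auto
  moreover have "col_before a b \<longleftrightarrow> (w a < w b \<longleftrightarrow> c ?i = 1)"
    using sign(2) False assms(3) unfolding col_before_def by auto
  moreover have "M ?i ?j = 1 \<longleftrightarrow> (c ?i = 1 \<longleftrightarrow> r ?j = 1)" using sign by auto
  ultimately show ?thesis using order by blast
qed (simp add: col_before_def row_before_def)

sublocale abstract_coil N ell col_of row_of col_before row_before
proof
  show "3 \<le> ell" using unicyclic_cycle_len_ge_3[OF unicyclic] .
  show "ell < N" by (rule cycle_len_less_length)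
  show "col_of a = col_of b \<and> row_of a = row_of b \<longleftrightarrow> a mod ell = b mod ell"
    if "a \<in> {1..N}" "b \<in> {1..N}" for a b
    using cell_of_eq_iff_mod[OF that] unfolding col_of_def row_of_def by (simp add: prod_eq_iff)
  show "col_before a b \<longleftrightarrow> row_before a b"
    if "a \<in> {1..N}" "b \<in> {1..N}" "col_of a = col_of b" "row_of a = row_of b" for a b
    using col_before_iff_row_before_in_cell that .
  show "row_of x = row_of y \<or> row_of y = row_of z \<or> row_of x = row_of z"
    if "x \<in> {1..N}" "y \<in> {1..N}" "z \<in> {1..N}" "col_of x = col_of y" "col_of y = col_of z" for x y z
    using cycle_cells_col_two_rows[OF unicyclic] cell_of_in_cycle_cells that
    unfolding col_of_def row_of_def by (metis prod.collapse)
  show "col_of x = col_of y \<or> col_of y = col_of z \<or> col_of x = col_of z"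
    if "x \<in> {1..N}" "y \<in> {1..N}" "z \<in> {1..N}" "row_of x = row_of y" "row_of y = row_of z" for x y z
    using cycle_cells_row_two_cols[OF unicyclic] cell_of_in_cycle_cells that
    unfolding col_of_def row_of_def by (metis prod.collapse)
  show "col_before i (Suc i) \<or> row_before i (Suc i)" if "1 \<le> i" "i < N" for i
    using orient_arrow_imp_before arrow_Suc that by simp
  show "col_before (Suc (i + ell)) i \<or> row_before (Suc (i + ell)) i" if "1 \<le> i" "i + ell < N" for i
    using orient_arrow_imp_before arrow_back that by simp
  show "col_before (Suc ell) 1 \<or> row_before (Suc ell) 1"
    using orient_arrow_imp_before arrow_first cycle_len_less_length by simp
qed (auto simp: col_before_def row_before_def)

end

section \<open>Embeddings between coils\<close>

locale coil_embedding =
  P: unicyclic_coil M p q c r n pi vp hp w labp +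
  S: unicyclic_coil M p q c r m sigma vs hs u labs
  for M p q c r n pi vp hp w labp m sigma vs hs u labs +
  fixes f :: "nat \<Rightarrow> nat"
  assumes f_strict_mono: "strict_mono_on {1..m} f"
    and f_range: "f ` {1..m} \<subseteq> {1..n}"
    and f_values: "\<forall>a\<in>{1..m}. \<forall>b\<in>{1..m}. sigma a < sigma b \<longleftrightarrow> pi (f a) < pi (f b)"
    and f_cells: "\<forall>a\<in>{1..m}. \<forall>i\<in>{1..p}. \<forall>j\<in>{1..q}.
      in_cell vs hs sigma i j a \<longrightarrow> in_cell vp hp pi i j (f a)"
begin

definition index :: "nat \<Rightarrow> nat" where
  "index t = inv_into {1..n} w (f (u t))"

lemma index_range: "t \<in> {1..m} \<Longrightarrow> index t \<in> {1..n}"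
  and w_index: "t \<in> {1..m} \<Longrightarrow> w (index t) = f (u t)"
proof -
  assume "t \<in> {1..m}"
  then have "f (u t) \<in> w ` {1..n}"
    using f_range S.w_range P.bij_w unfolding bij_betw_def by blast
  then show "index t \<in> {1..n}" "w (index t) = f (u t)"
    unfolding index_def by (rule inv_into_into, rule f_inv_into_f)
qed

lemma cell_of_index: "t \<in> {1..m} \<Longrightarrow> P.cell_of (index t) = S.cell_of t"
proof -
  assume t: "t \<in> {1..m}"
  have "in_cell vp hp pi (S.col_of t) (S.row_of t) (f (u t))"
    using f_cells S.w_range[OF t] S.cell_of_in_range[OF t] S.in_cell_of[OF t] by blast
  then show ?thesis
    using P.cell_of_eq[OF index_range[OF t]] S.cell_of_in_cycle_cells[OF t] w_index[OF t]
    unfolding S.col_of_def S.row_of_def by simp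
qed

lemma index_mod_cong:
  "s \<in> {1..m} \<Longrightarrow> t \<in> {1..m} \<Longrightarrow> s mod P.ell = t mod P.ell
   \<Longrightarrow> index s mod P.ell = index t mod P.ell"
  using S.cell_of_eq_iff_mod P.cell_of_eq_iff_mod index_range cell_of_index by metis

lemma index_before:
  assumes "s \<in> {1..m}" "t \<in> {1..m}" "orient_arrow p q c r vs hs sigma (u s) (u t)"
  shows "P.before (index s) (index t)"
proof -
  have same_lines: "P.col_of (index x) = S.col_of x" "P.row_of (index x) = S.row_of x"
    if "x \<in> {1..m}" for x
    using cell_of_index[OF that] unfolding P.col_of_def S.col_of_def P.row_of_def S.row_of_def
    by simp_all
  have position_order: "w (index x) < w (index y) \<longleftrightarrow> u x < u y"
    if "x \<in> {1..m}" "y \<in> {1..m}" for x y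
    using strict_mono_on_less[OF f_strict_mono S.w_range[OF that(1)] S.w_range[OF that(2)]]
      w_index that by simp
  have value_order: "pi (w (index x)) < pi (w (index y)) \<longleftrightarrow> sigma (u x) < sigma (u y)"
    if "x \<in> {1..m}" "y \<in> {1..m}" for x y
    using f_values S.w_range that w_index by simp
  show ?thesis
    using S.orient_arrow_imp_before[OF assms] same_lines[OF assms(1)] same_lines[OF assms(2)]
      position_order[OF assms(1,2)] position_order[OF assms(2,1)]
      value_order[OF assms(1,2)] value_order[OF assms(2,1)]
    unfolding P.before_def P.col_before_def P.row_before_def S.col_before_def S.row_before_def
    by auto
qed

sublocale abstract_coil_map n P.ell P.col_of P.row_of P.col_before P.row_before m index
proof
  show "P.ell < m" using S.cycle_len_less_length .
  show "index t \<in> {1..n}" if "t \<in> {1..m}" for t using index_range that .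
  show "index s mod P.ell = index t mod P.ell"
    if "s \<in> {1..m}" "t \<in> {1..m}" "s mod P.ell = t mod P.ell" for s t
    using index_mod_cong that .
  show "P.before (index t) (index (Suc t))" if "1 \<le> t" "t < m" for t
    using index_before S.arrow_Suc that by simp
  show "P.before (index (Suc (t + P.ell))) (index t)" if "1 \<le> t" "t + P.ell < m" for t
    using index_before S.arrow_back that by simp
  show "P.before (index (Suc P.ell)) (index 1)"
    using index_before S.arrow_first S.cycle_len_less_length by simp
qed

lemma index_endpoint_if_circ:
  assumes "t \<in> {1..m}" "coil_label w n (f (u t)) = Circ"
  shows "index t = 1 \<or> index t = n"
proof -
  have "w (index t) = w 1 \<or> w (index t) = w n"
    using assms(2) w_index[OF assms(1)] unfolding coil_label_def by (simp split: if_splits)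
  moreover have "1 \<in> {1..n}" "n \<in> {1..n}" using P.cycle_len_less_length by simp_all
  ultimately show ?thesis
    using P.bij_w index_range[OF assms(1)] unfolding bij_betw_def inj_on_def by blast
qed

end

theorem lemma4p11:
  fixes M :: "nat \<Rightarrow> nat \<Rightarrow> int" and p q :: nat and c r :: "nat \<Rightarrow> int"
    and n m :: nat and pi sigma :: "nat \<Rightarrow> nat"
    and vp hp vs hs :: "nat \<Rightarrow> real" and w u :: "nat \<Rightarrow> nat"
    and labp labs :: "nat \<times> nat \<Rightarrow> nat"
  assumes "partial_mult_matrix M p q c r"
    and "unicyclic M p q"
    and "gridded_coil M p q c r n pi vp hp w labp"
    and "gridded_coil M p q c r m sigma vs hs u labs"
    and "m < n"
  shows "\<not> labelled_embedding p q m sigma vs hs (coil_label u m) n pi vp hp (coil_label w n)"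
proof
  assume "labelled_embedding p q m sigma vs hs (coil_label u m) n pi vp hp (coil_label w n)"
  then obtain f where f: "strict_mono_on {1..m} f" "f ` {1..m} \<subseteq> {1..n}"
    "\<forall>a\<in>{1..m}. \<forall>b\<in>{1..m}. sigma a < sigma b \<longleftrightarrow> pi (f a) < pi (f b)"
    "\<forall>a\<in>{1..m}. \<forall>i\<in>{1..p}. \<forall>j\<in>{1..q}. in_cell vs hs sigma i j a \<longrightarrow> in_cell vp hp pi i j (f a)"
    and labels: "\<forall>a\<in>{1..m}. coil_label u m a = coil_label w n (f a)"
    unfolding labelled_embedding_def by blast
  interpret coil_embedding M p q c r n pi vp hp w labp m sigma vs hs u labs f
    using assms(1-4) f by unfold_locales
  have m_bounds: "2 \<le> m" "1 \<in> {1..m}" "m \<in> {1..m}"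
    using S.cycle_len_less_length S.cycle_len_ge_3 by auto
  have "coil_label w n (f (u t)) = Circ" if "t \<in> {1, m}" for t
    using labels S.w_range that m_bounds unfolding coil_label_def by (metis insertE singletonD)
  then have "index 1 = 1 \<or> index 1 = n" "index m = 1 \<or> index m = n"
    using index_endpoint_if_circ m_bounds by simp_all
  moreover have "index m + 1 = index 1 + m" using map_shift m_bounds by simp
  ultimately show False using m_bounds assms(5) by auto
qed

end
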